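(* Let $k\in\mathbb{N}$, let $P$ be the path $x_1,x_2,\dots,x_{2k+1}$, let $m\ge 3$, and let $L$ be an $m$-assignment for $P$. For $c\in L(x_1)$ and $d\in L(x_{2k+1})$ let $N(c,d)$ be the number of proper $L$-colorings of $P$ in which $x_1$ is colored $c$ and $x_{2k+1}$ is colored $d$. Then for every $(c,d)\in L(x_1)\times L(x_{2k+1})$, \[\frac{(m-1)^{2k+1}-(m-1)}{m(m-1)}\le N(c,d).\] Furthermore, there exist at least $m$ pairs $(y,z)\in L(x_1)\times L(x_{2k+1})$ such that \[\frac{(m-1)^{2k+1}-(m-1)}{m(m-1)}+1=\frac{(m-1)^{2k}+(m-1)}{m}\le N(y,z).\]
   Context: An $m$-assignment $L$ assigns to each vertex $x$ a set $L(x)$ of $m$ colors; a proper $L$-coloring is a proper coloring $f$ with $f(x)\in L(x)$ for every vertex $x$. *)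

theory Defs
  imports Complex_Main "HOL-Library.FuncSet"
begin

(* The path P = x_1, ..., x_n with vertices represented by the indices 1..n;
   edges are {i, i+1} for 1 <= i < n. *)

definition proper_L_colorings :: "nat \<Rightarrow> (nat \<Rightarrow> 'c set) \<Rightarrow> (nat \<Rightarrow> 'c) set" where
  "proper_L_colorings n L =
     {f \<in> Pi\<^sub>E {1..n} L. \<forall>i. 1 \<le> i \<and> i < n \<longrightarrow> f i \<noteq> f (Suc i)}"

definition N_path :: "nat \<Rightarrow> (nat \<Rightarrow> 'c set) \<Rightarrow> 'c \<Rightarrow> 'c \<Rightarrow> nat" where
  "N_path n L c d = card {f \<in> proper_L_colorings n L. f 1 = c \<and> f n = d}"

end

(* Let a_n(e) be the number of proper L-colourings of x_1..x_n starting with c and ending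
   with e, and T_n the sum of a_n over L(x_n). Removing the last vertex gives
   a_{n+1}(d) + [d \<in> L(x_n)] a_n(d) = T_n; summing over d yields T_{n+1} \<ge> (m-1) T_n, so
   T_n \<ge> (m-1)^(n-1). Applying the recursion twice, a_{n+2}(d) \<ge> (m-2) T_n + a_n(g) for some
   g \<in> L(x_n), and since (m-1)^2 = m(m-2) + 1 the bound m a_n + 1 \<ge> (m-1)^(n-1) passes from
   n to n+2. For the second claim, (m-1)^(2k) = m q + 1 because (m-1)^2 \<equiv> 1 (mod m); the at
   least m q + 1 colourings starting with c are spread over m end colours, so some end colour
   receives q + 1 of them. *)

theory Submission
  imports Defs
begin

definition path_colorings ::
    "nat \<Rightarrow> (nat \<Rightarrow> 'c set) \<Rightarrow> 'c \<Rightarrow> 'c \<Rightarrow> (nat \<Rightarrow> 'c) set" where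
  "path_colorings n L c d = {f \<in> proper_L_colorings n L. f 1 = c \<and> f n = d}"

lemma N_path_eq_card: "N_path n L c d = card (path_colorings n L c d)"
  by (simp add: N_path_def path_colorings_def)

lemma finite_path_colorings:
  assumes "\<And>i. i \<in> {1..n} \<Longrightarrow> finite (L i)"
  shows "finite (path_colorings n L c d)"
proof (rule finite_subset)
  show "path_colorings n L c d \<subseteq> Pi\<^sub>E {1..n} L"
    by (auto simp: path_colorings_def proper_L_colorings_def)
  show "finite (Pi\<^sub>E {1..n} L)"
    using assms by (intro finite_PiE) auto
qed

lemma N_path_1: "N_path 1 L c d = (if c = d \<and> c \<in> L 1 then 1 else 0)"
proof -
  have "path_colorings 1 L c d = (if c = d \<and> c \<in> L 1 then {(\<lambda>_. undefined)(1 := c)} else {})"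
    by (auto simp: path_colorings_def proper_L_colorings_def PiE_iff extensional_def)
  then show ?thesis
    by (auto simp: N_path_eq_card)
qed

lemma bij_betw_extend_path_colorings:
  assumes "1 \<le> n" and "d \<in> L (Suc n)"
  shows "bij_betw (\<lambda>g. g(Suc n := d))
           (\<Union>e \<in> L n - {d}. path_colorings n L c e) (path_colorings (Suc n) L c d)"
  unfolding bij_betw_def
proof
  show "inj_on (\<lambda>g. g(Suc n := d)) (\<Union>e \<in> L n - {d}. path_colorings n L c e)"
  proof (rule inj_onI)
    fix g h
    assume "g \<in> (\<Union>e \<in> L n - {d}. path_colorings n L c e)"
      and "h \<in> (\<Union>e \<in> L n - {d}. path_colorings n L c e)"
      and eq: "g(Suc n := d) = h(Suc n := d)"
    then have "g (Suc n) = h (Suc n)"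
      by (auto simp: path_colorings_def proper_L_colorings_def PiE_iff extensional_def)
    with eq show "g = h"
      by (metis fun_upd_triv fun_upd_upd)
  qed
  show "(\<lambda>g. g(Suc n := d)) ` (\<Union>e \<in> L n - {d}. path_colorings n L c e)
          = path_colorings (Suc n) L c d"
  proof (intro equalityI subsetI)
    fix f
    assume "f \<in> (\<lambda>g. g(Suc n := d)) ` (\<Union>e \<in> L n - {d}. path_colorings n L c e)"
    then obtain g e where e: "e \<in> L n - {d}" and g: "g \<in> path_colorings n L c e"
      and f: "f = g(Suc n := d)"
      by blast
    show "f \<in> path_colorings (Suc n) L c d"
      using g e assms unfolding f
      by (auto simp: path_colorings_def proper_L_colorings_def PiE_iff extensional_def
                     le_Suc_eq less_Suc_eq)
  next
    fix f
    assume f: "f \<in> path_colorings (Suc n) L c d"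
    then have "f n \<in> L n - {d}" and "f(Suc n := undefined) \<in> path_colorings n L c (f n)"
      using assms by (auto simp: path_colorings_def proper_L_colorings_def PiE_iff extensional_def)
    moreover have "f = (f(Suc n := undefined))(Suc n := d)"
      using f by (auto simp: path_colorings_def)
    ultimately show "f \<in> (\<lambda>g. g(Suc n := d)) ` (\<Union>e \<in> L n - {d}. path_colorings n L c e)"
      by blast
  qed
qed

lemma N_path_Suc:
  assumes "1 \<le> n" and "\<And>i. i \<in> {1..Suc n} \<Longrightarrow> finite (L i)" and "d \<in> L (Suc n)"
  shows "N_path (Suc n) L c d = (\<Sum>e \<in> L n - {d}. N_path n L c e)"
proof -
  have "N_path (Suc n) L c d = card (\<Union>e \<in> L n - {d}. path_colorings n L c e)"
    using assms(1,3) by (metis N_path_eq_card bij_betw_same_card bij_betw_extend_path_colorings)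
  also have "\<dots> = (\<Sum>e \<in> L n - {d}. N_path n L c e)"
  proof (subst card_UN_disjoint)
    show "\<forall>e \<in> L n - {d}. finite (path_colorings n L c e)"
      using assms(2) by (auto intro: finite_path_colorings)
  qed (use assms(1,2) in \<open>auto simp: N_path_eq_card path_colorings_def\<close>)
  finally show ?thesis .
qed

lemma sum_N_path_Suc:
  assumes "1 \<le> n" and fin: "\<And>i. i \<in> {1..Suc n} \<Longrightarrow> finite (L i)"
    and E: "E \<subseteq> L (Suc n)"
  shows "(\<Sum>e \<in> E. N_path (Suc n) L c e) + (\<Sum>e \<in> E \<inter> L n. N_path n L c e)
           = card E * (\<Sum>g \<in> L n. N_path n L c g)"
proof -
  have finE: "finite E" and finLn: "finite (L n)"
    using fin assms(1) E by (auto intro: finite_subset)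
  have "N_path (Suc n) L c e + (if e \<in> L n then N_path n L c e else 0) = (\<Sum>g \<in> L n. N_path n L c g)"
    if "e \<in> E" for e
    using that E finLn N_path_Suc[OF assms(1) fin] by (auto simp: sum.remove)
  then have "(\<Sum>e \<in> E. N_path (Suc n) L c e + (if e \<in> L n then N_path n L c e else 0))
               = card E * (\<Sum>g \<in> L n. N_path n L c g)"
    by simp
  then show ?thesis
    using finE by (simp add: sum.distrib sum.inter_restrict)
qed

lemma sum_N_path_ge:
  assumes "1 \<le> n" and "\<And>i. i \<in> {1..n} \<Longrightarrow> finite (L i) \<and> m \<le> card (L i)"
    and "c \<in> L 1"
  shows "(m - 1) ^ (n - 1) \<le> (\<Sum>e \<in> L n. N_path n L c e)"
  using assms(1,2)
proof (induction n rule: nat_induct_at_least)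
  case base
  have "(\<Sum>e \<in> L 1. N_path 1 L c e) = 1"
    using base assms(3) by (simp add: N_path_1[unfolded One_nat_def] sum.delta)
  then show ?case
    by simp
next
  case (Suc n)
  define T where "T = (\<Sum>e \<in> L n. N_path n L c e)"
  have fin: "\<And>i. i \<in> {1..Suc n} \<Longrightarrow> finite (L i)" and "m \<le> card (L (Suc n))"
    using Suc.prems by auto
  have IH: "(m - 1) ^ (n - 1) \<le> T"
    using Suc by (simp add: T_def)
  have "(\<Sum>e \<in> L (Suc n) \<inter> L n. N_path n L c e) \<le> T"
    unfolding T_def using fin Suc.hyps by (intro sum_mono2) auto
  moreover have "m * T \<le> card (L (Suc n)) * T"
    using \<open>m \<le> card (L (Suc n))\<close> by simp
  moreover have "(\<Sum>e \<in> L (Suc n). N_path (Suc n) L c e)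
                   + (\<Sum>e \<in> L (Suc n) \<inter> L n. N_path n L c e)
                   = card (L (Suc n)) * T"
    unfolding T_def by (rule sum_N_path_Suc) (use Suc.hyps fin in auto)
  ultimately have "(m - 1) * T \<le> (\<Sum>e \<in> L (Suc n). N_path (Suc n) L c e)"
    unfolding diff_mult_distrib mult_1 by linarith
  moreover have "(m - 1) ^ (Suc n - 1) \<le> (m - 1) * T"
    using IH Suc.hyps by (cases n) simp_all
  ultimately show ?case
    by linarith
qed

lemma pred_square_eq:
  assumes "2 \<le> m"
  shows "(m - 1) ^ 2 = m * (m - 2) + (1::nat)"
proof -
  obtain k where "m = k + 2"
    using assms le_Suc_ex by (metis add.commute)
  then show ?thesis
    by (simp add: power2_eq_square algebra_simps)
qed

lemma N_path_Suc_Suc_ge: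
  assumes "1 \<le> n" and "2 \<le> m"
    and L: "\<And>i. i \<in> {1..Suc (Suc n)} \<Longrightarrow> finite (L i) \<and> card (L i) = m"
    and d: "d \<in> L (Suc (Suc n))"
  shows "\<exists>g \<in> L n. (m - 2) * (\<Sum>e \<in> L n. N_path n L c e) + N_path n L c g
                      \<le> N_path (Suc (Suc n)) L c d"
proof -
  define T where "T = (\<Sum>e \<in> L n. N_path n L c e)"
  define E where "E = L (Suc n) - {d}"
  have fin: "\<And>i. i \<in> {1..Suc n} \<Longrightarrow> finite (L i)"
    using L by auto
  have Ln: "finite (L n)" "card (L n) = m" and "finite (L (Suc n))" "card (L (Suc n)) = m"
    using L assms(1) by auto
  then have cardE: "m - 1 \<le> card E"
    by (simp add: E_def card_Diff_singleton_if)
  have "N_path (Suc (Suc n)) L c d = (\<Sum>e \<in> E. N_path (Suc n) L c e)"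
    unfolding E_def using assms(1) L d by (intro N_path_Suc) auto
  moreover have "(\<Sum>e \<in> E. N_path (Suc n) L c e) + (\<Sum>e \<in> E \<inter> L n. N_path n L c e)
                   = card E * T"
    unfolding T_def by (rule sum_N_path_Suc) (use assms(1) fin E_def in auto)
  ultimately have key: "N_path (Suc (Suc n)) L c d + (\<Sum>e \<in> E \<inter> L n. N_path n L c e) = card E * T"
    by simp
  have split: "(m - 1) * T = (m - 2) * T + T"
    using assms(2) by (simp add: diff_mult_distrib)
  consider (covered) "L n \<subseteq> E" | (missed) g where "g \<in> L n" "g \<notin> E"
    by blast
  then show ?thesis
  proof cases
    case covered
    obtain g where g: "g \<in> L n"
      using Ln assms(2) by (metis card.empty ex_in_conv not_numeral_le_zero)
    have "m \<le> card E"
      using covered Ln \<open>finite (L (Suc n))\<close> by (metis E_def card_mono finite_Diff)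
    then have "m * T \<le> card E * T"
      by simp
    moreover have "(\<Sum>e \<in> E \<inter> L n. N_path n L c e) = T"
      using covered by (simp add: T_def Int_absorb1)
    ultimately have "(m - 1) * T \<le> N_path (Suc (Suc n)) L c d"
      using key unfolding diff_mult_distrib mult_1 by linarith
    moreover have "N_path n L c g \<le> T"
      unfolding T_def using Ln g by (intro member_le_sum) auto
    ultimately have "(m - 2) * T + N_path n L c g \<le> N_path (Suc (Suc n)) L c d"
      using split by linarith
    with g show ?thesis
      by (auto simp: T_def)
  next
    case missed
    have "(\<Sum>e \<in> E \<inter> L n. N_path n L c e) + N_path n L c g
            = (\<Sum>e \<in> insert g (E \<inter> L n). N_path n L c e)"
      using missed Ln by simp
    also have "\<dots> \<le> T"
      unfolding T_def using missed Ln by (intro sum_mono2) auto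
    finally have "(\<Sum>e \<in> E \<inter> L n. N_path n L c e) + N_path n L c g \<le> T" .
    moreover have "(m - 1) * T \<le> card E * T"
      using cardE by simp
    ultimately have "(m - 2) * T + N_path n L c g \<le> N_path (Suc (Suc n)) L c d"
      using key split by linarith
    with missed show ?thesis
      by (auto simp: T_def)
  qed
qed

lemma N_path_odd_ge:
  assumes "2 \<le> m" and L: "\<And>i. i \<in> {1..2 * j + 1} \<Longrightarrow> finite (L i) \<and> card (L i) = m"
    and c: "c \<in> L 1" and d: "d \<in> L (2 * j + 1)"
  shows "(m - 1) ^ (2 * j) \<le> m * N_path (2 * j + 1) L c d + 1"
  using L d
proof (induction j arbitrary: d)
  case 0
  then show ?case
    by simp
next
  case (Suc j)
  define n where "n = 2 * j + 1"
  define x where "x = (m - 1) ^ (2 * j)"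
  define T where "T = (\<Sum>e \<in> L n. N_path n L c e)"
  have L': "\<And>i. i \<in> {1..Suc (Suc n)} \<Longrightarrow> finite (L i) \<and> card (L i) = m"
    using Suc.prems(1) by (simp add: n_def)
  obtain g where g: "g \<in> L n" and N_ge: "(m - 2) * T + N_path n L c g \<le> N_path (Suc (Suc n)) L c d"
    using N_path_Suc_Suc_ge[of n m L d c] assms(1) L' Suc.prems(2)
    by (auto simp: n_def T_def)
  have "x \<le> m * N_path n L c g + 1"
    using Suc.IH[of g] Suc.prems(1) g by (simp add: n_def x_def)
  moreover have "x \<le> T"
    using sum_N_path_ge[of n L m c] L' c by (simp add: n_def x_def T_def)
  then have "m * (m - 2) * x \<le> m * (m - 2) * T"
    by simp
  ultimately have "(m * (m - 2) + 1) * x \<le> m * ((m - 2) * T + N_path n L c g) + 1"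
    unfolding add_mult_distrib distrib_left mult.assoc by linarith
  also have "\<dots> \<le> m * N_path (Suc (Suc n)) L c d + 1"
    using N_ge by simp
  finally have "(m - 1) ^ 2 * x \<le> m * N_path (Suc (Suc n)) L c d + 1"
    by (simp only: pred_square_eq[OF assms(1)])
  moreover have "(m - 1) ^ (2 * Suc j) = (m - 1) ^ 2 * x"
    unfolding x_def by (metis mult_Suc_right power_add)
  ultimately show ?case
    by (simp add: n_def)
qed

lemma even_power_pred_mod:
  fixes m k :: nat
  assumes "2 \<le> m"
  shows "(m - 1) ^ (2 * k) mod m = 1"
proof -
  have "(m - 1) ^ (2 * k) = (m * (m - 2) + 1) ^ k"
    by (simp only: power_mult pred_square_eq[OF assms])
  then have "(m - 1) ^ (2 * k) mod m = ((m * (m - 2) + 1) mod m) ^ k mod m"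
    by (simp add: power_mod)
  also have "(m * (m - 2) + 1) mod m = 1 mod m"
    by (rule mod_mult_self4)
  finally show ?thesis
    using assms by simp
qed

lemma exists_N_path_odd_ge:
  assumes "2 \<le> m" and L: "\<And>i. i \<in> {1..2 * k + 1} \<Longrightarrow> finite (L i) \<and> card (L i) = m"
    and c: "c \<in> L 1"
  shows "\<exists>d \<in> L (2 * k + 1). (m - 1) ^ (2 * k) + (m - 1) \<le> m * N_path (2 * k + 1) L c d"
proof -
  define n where "n = 2 * k + 1"
  define q where "q = (m - 1) ^ (2 * k) div m"
  have x: "(m - 1) ^ (2 * k) = m * q + 1"
    unfolding q_def using even_power_pred_mod[OF assms(1)] by (metis div_mult_mod_eq mult.commute)
  have Ln: "finite (L n)" "card (L n) = m"
    using L by (auto simp: n_def)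
  have "\<exists>d \<in> L n. q < N_path n L c d"
  proof (rule ccontr)
    assume "\<not> ?thesis"
    then have "(\<Sum>d \<in> L n. N_path n L c d) \<le> m * q"
      using sum_bounded_above[of "L n" "N_path n L c" q] Ln by (auto simp: not_less)
    moreover have "(m - 1) ^ (2 * k) \<le> (\<Sum>d \<in> L n. N_path n L c d)"
      using sum_N_path_ge[of n L m c] L c by (simp add: n_def)
    ultimately show False
      unfolding x by linarith
  qed
  then obtain d where d: "d \<in> L n" and "q + 1 \<le> N_path n L c d"
    by auto
  from this(2) have "m * (q + 1) \<le> m * N_path n L c d"
    by (rule mult_le_mono2)
  then show ?thesis
    using d assms(1) unfolding x n_def by (auto simp: algebra_simps)
qed

lemma card_le_card_Sigma_if_total:
  assumes "finite A" and "finite B" and "\<And>y. y \<in> A \<Longrightarrow> \<exists>z \<in> B. P y z"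
  shows "card A \<le> card {(y, z) \<in> A \<times> B. P y z}"
proof -
  obtain h where h: "\<And>y. y \<in> A \<Longrightarrow> h y \<in> B \<and> P y (h y)"
    using assms(3) by metis
  have fin: "finite {(y, z) \<in> A \<times> B. P y z}"
    by (rule finite_subset[OF _ finite_cartesian_product[OF assms(1,2)]]) auto
  have "card A = card ((\<lambda>y. (y, h y)) ` A)"
    by (simp add: card_image inj_on_def)
  also have "\<dots> \<le> card {(y, z) \<in> A \<times> B. P y z}"
    using fin h by (intro card_mono) auto
  finally show ?thesis .
qed

lemma card_N_path_odd_ge:
  assumes "2 \<le> m" and L: "\<And>i. i \<in> {1..2 * k + 1} \<Longrightarrow> finite (L i) \<and> card (L i) = m"
  shows "m \<le> card {(y, z) \<in> L 1 \<times> L (2 * k + 1).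
                      (m - 1) ^ (2 * k) + (m - 1) \<le> m * N_path (2 * k + 1) L y z}"
proof -
  have "m = card (L 1)"
    using L by simp
  also have "\<dots> \<le> card {(y, z) \<in> L 1 \<times> L (2 * k + 1).
                            (m - 1) ^ (2 * k) + (m - 1) \<le> m * N_path (2 * k + 1) L y z}"
    using L exists_N_path_odd_ge[OF assms] by (intro card_le_card_Sigma_if_total) auto
  finally show ?thesis .
qed

lemma real_divide_le_iff:
  fixes a b m :: nat
  assumes "0 < m"
  shows "real a / real m \<le> real b \<longleftrightarrow> a \<le> m * b"
  using assms by (simp add: divide_le_eq mult.commute flip: of_nat_mult)

theorem lemma20:
  fixes k m :: nat and L :: "nat \<Rightarrow> 'c set"
  assumes "m \<ge> 3"
    and "\<And>i. i \<in> {1..2*k+1} \<Longrightarrow> finite (L i) \<and> card (L i) = m"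
  shows "(\<forall>c \<in> L 1. \<forall>d \<in> L (2*k+1).
            (real (m-1) ^ (2*k+1) - real (m-1)) / (real m * real (m-1))
              \<le> real (N_path (2*k+1) L c d))
       \<and> (real (m-1) ^ (2*k+1) - real (m-1)) / (real m * real (m-1)) + 1
            = (real (m-1) ^ (2*k) + real (m-1)) / real m
       \<and> m \<le> card {(y, z) \<in> L 1 \<times> L (2*k+1).
                 (real (m-1) ^ (2*k) + real (m-1)) / real m
                   \<le> real (N_path (2*k+1) L y z)}"
proof -
  define x where "x = (m - 1) ^ (2 * k)"
  have m: "2 \<le> m" and "0 < m"
    using assms(1) by simp_all
  have "1 \<le> x"
    using m by (simp add: x_def)
  then have bound_eq: "(real (m-1) ^ (2*k+1) - real (m-1)) / (real m * real (m-1)) = real (x - 1) / real m"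
    using m by (simp add: x_def of_nat_diff field_simps)
  have "real (x - 1) / real m + 1 = real (x + (m - 1)) / real m"
    using m \<open>1 \<le> x\<close> by (simp add: of_nat_diff field_simps)
  moreover have "real (x - 1) / real m \<le> real (N_path (2*k+1) L c d)"
    if "c \<in> L 1" "d \<in> L (2*k+1)" for c d
    unfolding real_divide_le_iff[OF \<open>0 < m\<close>]
    using N_path_odd_ge[OF m assms(2) that, folded x_def] by linarith
  moreover have "m \<le> card {(y, z) \<in> L 1 \<times> L (2*k+1).
                              real (x + (m - 1)) / real m \<le> real (N_path (2*k+1) L y z)}"
    unfolding real_divide_le_iff[OF \<open>0 < m\<close>]
    using card_N_path_odd_ge[of m k L, OF m assms(2), folded x_def] .
  ultimately show ?thesis
    unfolding bound_eq by (simp add: x_def)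
qed

end
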